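(* Let $p$ be a hyperbolic polynomial of degree $d$ on $\mathbb{R}^n$, and suppose an evaluation oracle for $p$ is given which returns $p(z)$ for any $z\in\mathbb{C}^n$ in time $\mathcal{T}_O$. Then for any $x\in\mathbb{R}^n$ (with $p(x)\neq0$) and any $w\in\mathbb{R}^n$, the vector $\nabla^2(-\ln p(x))\,w$ can be computed in $O(nd^2\mathcal{T}_O)$ time.
   Context: A hyperbolic polynomial is a real homogeneous polynomial $p$ for which there is a direction $e$ such that $t\mapsto p(te-x)$ has only real roots for all $x\in\mathbb{R}^n$. *)

theory Defs
  imports "HOL-Analysis.Analysis"
begin

text \<open>A polynomial in the variables z_0,...,z_(n-1) is given by a coefficient
  function on exponent vectors alpha :: nat => nat; it must have finite support and
  only use variables below n.\<close>

definition is_poly :: "nat \<Rightarrow> ((nat \<Rightarrow> nat) \<Rightarrow> real) \<Rightarrow> bool" where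
  "is_poly n c \<longleftrightarrow> finite {\<alpha>. c \<alpha> \<noteq> 0} \<and> (\<forall>\<alpha>. c \<alpha> \<noteq> 0 \<longrightarrow> (\<forall>i\<ge>n. \<alpha> i = 0))"

definition peval :: "nat \<Rightarrow> ((nat \<Rightarrow> nat) \<Rightarrow> real) \<Rightarrow> (nat \<Rightarrow> 'a::{real_algebra_1,comm_ring_1}) \<Rightarrow> 'a" where
  "peval n c z = (\<Sum>\<alpha>\<in>{\<alpha>. c \<alpha> \<noteq> 0}. of_real (c \<alpha>) * (\<Prod>i<n. z i ^ \<alpha> i))"

definition homog_poly :: "nat \<Rightarrow> nat \<Rightarrow> ((nat \<Rightarrow> nat) \<Rightarrow> real) \<Rightarrow> bool" where
  "homog_poly n d c \<longleftrightarrow> is_poly n c \<and> (\<exists>\<alpha>. c \<alpha> \<noteq> 0) \<and>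
     (\<forall>\<alpha>. c \<alpha> \<noteq> 0 \<longrightarrow> (\<Sum>i<n. \<alpha> i) = d)"

definition hyperbolic_poly :: "nat \<Rightarrow> nat \<Rightarrow> ((nat \<Rightarrow> nat) \<Rightarrow> real) \<Rightarrow> bool" where
  "hyperbolic_poly n d c \<longleftrightarrow> homog_poly n d c \<and>
     (\<exists>e::nat \<Rightarrow> real. peval n c e \<noteq> (0::real) \<and>
        (\<forall>x::nat \<Rightarrow> real. \<forall>t::complex.
            peval n c (\<lambda>i. t * of_real (e i) - of_real (x i)) = 0 \<longrightarrow> t \<in> \<real>))"

text \<open>Second partial derivative d_i d_j f at x (vectors are nat => real, coordinates i<n).\<close>
definition hess_entry :: "((nat \<Rightarrow> real) \<Rightarrow> real) \<Rightarrow> (nat \<Rightarrow> real) \<Rightarrow> nat \<Rightarrow> nat \<Rightarrow> real" where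
  "hess_entry f x i j =
     deriv (\<lambda>s. deriv (\<lambda>t. f ((x(j := x j + s))(i := (x(j := x j + s)) i + t))) 0) 0"

definition hess_vec :: "nat \<Rightarrow> ((nat \<Rightarrow> real) \<Rightarrow> real) \<Rightarrow> (nat \<Rightarrow> real) \<Rightarrow> (nat \<Rightarrow> real) \<Rightarrow> nat \<Rightarrow> real" where
  "hess_vec n f x w i = (\<Sum>j<n. hess_entry f x i j * w j)"

datatype instr =
    IConst complex
  | IX nat
  | IW nat
  | IAdd nat nat | ISub nat nat | IMul nat nat | IDiv nat nat
  | IOracle "nat list"

definition reg :: "complex list \<Rightarrow> nat \<Rightarrow> complex" where
  "reg rs k = (if k < length rs then rs ! k else 0)"

fun step :: "((nat \<Rightarrow> complex) \<Rightarrow> complex) \<Rightarrow> (nat \<Rightarrow> real) \<Rightarrow> (nat \<Rightarrow> real)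
              \<Rightarrow> complex list \<Rightarrow> instr \<Rightarrow> complex list" where
  "step orc x w rs (IConst a) = rs @ [a]"
| "step orc x w rs (IX i) = rs @ [of_real (x i)]"
| "step orc x w rs (IW i) = rs @ [of_real (w i)]"
| "step orc x w rs (IAdd a b) = rs @ [reg rs a + reg rs b]"
| "step orc x w rs (ISub a b) = rs @ [reg rs a - reg rs b]"
| "step orc x w rs (IMul a b) = rs @ [reg rs a * reg rs b]"
| "step orc x w rs (IDiv a b) = rs @ [reg rs a / reg rs b]"
| "step orc x w rs (IOracle args) =
     rs @ [orc (\<lambda>i. if i < length args then reg rs (args ! i) else 0)]"

definition run :: "((nat \<Rightarrow> complex) \<Rightarrow> complex) \<Rightarrow> (nat \<Rightarrow> real) \<Rightarrow> (nat \<Rightarrow> real)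
                    \<Rightarrow> instr list \<Rightarrow> complex list" where
  "run orc x w P = foldl (step orc x w) [] P"

fun instr_cost :: "real \<Rightarrow> instr \<Rightarrow> real" where
  "instr_cost T (IOracle _) = T"
| "instr_cost T _ = 1"

definition prog_cost :: "real \<Rightarrow> instr list \<Rightarrow> real" where
  "prog_cost T P = (\<Sum>ins\<leftarrow>P. instr_cost T ins)"

end

theory Submission
  imports Defs "HOL-Computational_Algebra.Polynomial"
begin

text \<open>For \<open>g = - ln \<bar>p\<bar>\<close> the i-th entry of the Hessian-vector product is
  \<open>\<partial>\<^sub>i p \<cdot> D\<^sub>w p / p\<^sup>2 - D\<^sub>w \<partial>\<^sub>i p / p\<close> at x. Every derivative occurring here is a fixed
  linear combination of values of p: the restriction of p to a line is a univariate polynomial of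
  degree at most d, so its derivative at 0 is the derivative of its Lagrange interpolant at the
  nodes 0, ..., d. Applied twice, \<open>D\<^sub>w \<partial>\<^sub>i p (x)\<close> is a linear combination of the \<open>(d + 1)\<^sup>2\<close>
  values \<open>p (x + l w + k e\<^sub>i)\<close>. The program first computes the coordinates of the points
  \<open>x + l w\<close>; an oracle call at \<open>x + l w + k e\<^sub>i\<close> then reuses these registers except at
  coordinate i. Hence each coordinate costs \<open>O(d\<^sup>2)\<close> instructions, and \<open>O(n d\<^sup>2)\<close> in total.\<close>

section \<open>Polynomial expressions and directional derivatives\<close>

datatype pexpr = PConst real | PVar nat | PAdd pexpr pexpr | PMult pexpr pexpr

fun eval_pexpr :: "pexpr \<Rightarrow> (nat \<Rightarrow> real) \<Rightarrow> real" where
  "eval_pexpr (PConst a) y = a"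
| "eval_pexpr (PVar k) y = y k"
| "eval_pexpr (PAdd e f) y = eval_pexpr e y + eval_pexpr f y"
| "eval_pexpr (PMult e f) y = eval_pexpr e y * eval_pexpr f y"

fun dir_deriv :: "pexpr \<Rightarrow> (nat \<Rightarrow> real) \<Rightarrow> pexpr" where
  "dir_deriv (PConst a) u = PConst 0"
| "dir_deriv (PVar k) u = PConst (u k)"
| "dir_deriv (PAdd e f) u = PAdd (dir_deriv e u) (dir_deriv f u)"
| "dir_deriv (PMult e f) u = PAdd (PMult (dir_deriv e u) f) (PMult e (dir_deriv f u))"

fun vars_below :: "nat \<Rightarrow> pexpr \<Rightarrow> bool" where
  "vars_below n (PConst a) = True"
| "vars_below n (PVar k) = (k < n)"
| "vars_below n (PAdd e f) = (vars_below n e \<and> vars_below n f)"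
| "vars_below n (PMult e f) = (vars_below n e \<and> vars_below n f)"

lemma has_real_derivative_eval_pexpr_line:
  "((\<lambda>s. eval_pexpr e (\<lambda>k. y k + s * u k)) has_real_derivative
     eval_pexpr (dir_deriv e u) (\<lambda>k. y k + s * u k)) (at s)"
  by (induction e) (auto intro!: derivative_eq_intros)

lemma vars_below_dir_deriv: "vars_below n e \<Longrightarrow> vars_below n (dir_deriv e u)"
  by (induction e) auto

lemma eval_dir_deriv_linear:
  "vars_below n e \<Longrightarrow>
     eval_pexpr (dir_deriv e u) y = (\<Sum>j<n. u j * eval_pexpr (dir_deriv e (indicator {j})) y)"
proof (induction e)
  case (PVar k)
  then show ?case by (simp add: indicator_def if_distrib cong: if_cong)
next
  case (PAdd e f)
  then show ?case by (simp add: sum.distrib distrib_left)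
next
  case (PMult e f)
  then show ?case by (simp add: sum.distrib algebra_simps sum_distrib_left sum_distrib_right)
qed simp

definition poly_fun :: "nat \<Rightarrow> ((nat \<Rightarrow> real) \<Rightarrow> real) \<Rightarrow> bool" where
  "poly_fun n F \<longleftrightarrow> (\<exists>e. vars_below n e \<and> eval_pexpr e = F)"

lemma poly_fun_const: "poly_fun n (\<lambda>y. a)"
  unfolding poly_fun_def by (rule exI[of _ "PConst a"]) auto

lemma poly_fun_var: "k < n \<Longrightarrow> poly_fun n (\<lambda>y. y k)"
  unfolding poly_fun_def by (rule exI[of _ "PVar k"]) auto

lemma poly_fun_add: "poly_fun n F \<Longrightarrow> poly_fun n G \<Longrightarrow> poly_fun n (\<lambda>y. F y + G y)"
  unfolding poly_fun_def by (metis eval_pexpr.simps(3) vars_below.simps(3))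

lemma poly_fun_mult: "poly_fun n F \<Longrightarrow> poly_fun n G \<Longrightarrow> poly_fun n (\<lambda>y. F y * G y)"
  unfolding poly_fun_def by (metis eval_pexpr.simps(4) vars_below.simps(4))

lemma poly_fun_sum:
  "finite A \<Longrightarrow> (\<And>a. a \<in> A \<Longrightarrow> poly_fun n (F a)) \<Longrightarrow> poly_fun n (\<lambda>y. \<Sum>a\<in>A. F a y)"
  by (induction A rule: finite_induct) (auto intro: poly_fun_const poly_fun_add)

lemma poly_fun_prod:
  "finite A \<Longrightarrow> (\<And>a. a \<in> A \<Longrightarrow> poly_fun n (F a)) \<Longrightarrow> poly_fun n (\<lambda>y. \<Prod>a\<in>A. F a y)"
  by (induction A rule: finite_induct) (auto intro: poly_fun_const poly_fun_mult)

lemma poly_fun_power: "poly_fun n F \<Longrightarrow> poly_fun n (\<lambda>y. F y ^ m)"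
  by (induction m) (auto intro: poly_fun_const poly_fun_mult)

lemma peval_real: "peval n c y = (\<Sum>\<alpha> | c \<alpha> \<noteq> 0. c \<alpha> * (\<Prod>i<n. y i ^ \<alpha> i))"
  unfolding peval_def by simp

lemma peval_cong: "(\<And>j. j < n \<Longrightarrow> z j = z' j) \<Longrightarrow> peval n c z = peval n c z'"
  unfolding peval_def by (intro sum.cong refl arg_cong2[where f = "(*)"] prod.cong) auto

lemma peval_of_real:
  "peval n c (\<lambda>j. of_real (z j)) = (of_real (peval n c z) :: 'a::{real_algebra_1, comm_ring_1})"
  unfolding peval_def by (simp add: of_real_sum of_real_mult of_real_prod of_real_power)

lemma poly_fun_peval: "is_poly n c \<Longrightarrow> poly_fun n (peval n c)"
  unfolding peval_real[abs_def] is_poly_def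
  by (intro poly_fun_sum poly_fun_mult poly_fun_const poly_fun_prod poly_fun_power poly_fun_var) auto

section \<open>Derivatives by Lagrange interpolation\<close>

definition lagrange_basis :: "nat \<Rightarrow> nat \<Rightarrow> real poly" where
  "lagrange_basis d k = (\<Prod>j\<in>{..d} - {k}. smult (1 / (real k - real j)) [:- real j, 1:])"

lemma poly_lagrange_basis:
  assumes "i \<le> d"
  shows "poly (lagrange_basis d k) (real i) = (if i = k then 1 else 0)"
proof -
  have "poly (lagrange_basis d k) (real i) = (\<Prod>j\<in>{..d} - {k}. (real i - real j) / (real k - real j))"
    by (simp add: lagrange_basis_def poly_prod diff_divide_distrib add_divide_distrib)
  then show ?thesis
    using assms by (auto intro!: prod.neutral)
qed

lemma degree_lagrange_basis: "k \<le> d \<Longrightarrow> degree (lagrange_basis d k) \<le> d"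
  unfolding lagrange_basis_def
  by (rule order_trans[OF degree_prod_sum_le]) (auto intro!: order_trans[OF sum_mono[of _ _ "\<lambda>_. 1"]])

lemma lagrange_interpolation:
  assumes "degree Q \<le> d"
  shows "Q = (\<Sum>k\<le>d. smult (poly Q (real k)) (lagrange_basis d k))" (is "Q = ?R")
proof (rule poly_eqI_degree[of "real ` {..d}"])
  show "poly Q x = poly ?R x" if "x \<in> real ` {..d}" for x
    using that by (auto simp: poly_sum poly_lagrange_basis if_distrib cong: if_cong)
  have "degree ?R \<le> d"
    by (intro degree_sum_le order_trans[OF degree_smult_le] degree_lagrange_basis) auto
  then show "degree Q < card (real ` {..d})" "degree ?R < card (real ` {..d})"
    using assms by (simp_all add: card_image)
qed

definition deriv_weight :: "nat \<Rightarrow> nat \<Rightarrow> real" where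
  "deriv_weight d k = coeff (lagrange_basis d k) 1"

lemma has_real_derivative_poly_0_interpolation:
  assumes "degree Q \<le> d"
  shows "(poly Q has_real_derivative (\<Sum>k\<le>d. deriv_weight d k * poly Q (real k))) (at 0)"
proof -
  have "coeff Q 1 = (\<Sum>k\<le>d. deriv_weight d k * poly Q (real k))"
    by (subst lagrange_interpolation[OF assms]) (simp add: coeff_sum deriv_weight_def mult.commute)
  then show ?thesis
    using poly_DERIV[of Q 0] by (simp add: poly_0_coeff_0 coeff_pderiv)
qed

context
  fixes n d :: nat and c :: "(nat \<Rightarrow> nat) \<Rightarrow> real"
  assumes is_poly: "is_poly n c"
    and total_degree: "\<And>\<alpha>. c \<alpha> \<noteq> 0 \<Longrightarrow> (\<Sum>i<n. \<alpha> i) \<le> d"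
begin

lemma peval_along_line_poly:
  obtains Q :: "real poly" where "degree Q \<le> d" "\<And>s. poly Q s = peval n c (\<lambda>i. y i + s * u i)"
proof
  let ?S = "{\<alpha>. c \<alpha> \<noteq> 0}"
  define Q where "Q = (\<Sum>\<alpha>\<in>?S. smult (c \<alpha>) (\<Prod>i<n. [:y i, u i:] ^ \<alpha> i))"
  have fin: "finite ?S" using is_poly by (simp add: is_poly_def)
  show "degree Q \<le> d"
    unfolding Q_def
  proof (intro degree_sum_le fin)
    fix \<alpha> assume "\<alpha> \<in> ?S"
    have "degree (smult (c \<alpha>) (\<Prod>i<n. [:y i, u i:] ^ \<alpha> i)) \<le> (\<Sum>i<n. degree ([:y i, u i:] ^ \<alpha> i))"
      using degree_prod_sum_le[of "{..<n}" "\<lambda>i. [:y i, u i:] ^ \<alpha> i"]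
      by (simp add: o_def order_trans[OF degree_smult_le])
    also have "\<dots> \<le> (\<Sum>i<n. \<alpha> i)"
      by (intro sum_mono order_trans[OF degree_power_le]) simp
    also have "\<dots> \<le> d" using \<open>\<alpha> \<in> ?S\<close> total_degree by simp
    finally show "degree (smult (c \<alpha>) (\<Prod>i<n. [:y i, u i:] ^ \<alpha> i)) \<le> d" .
  qed
  show "poly Q s = peval n c (\<lambda>i. y i + s * u i)" for s
    by (simp add: Q_def peval_real poly_sum poly_prod)
qed

lemma eval_dir_deriv_interpolation:
  assumes "eval_pexpr e = peval n c"
  shows "eval_pexpr (dir_deriv e u) y = (\<Sum>k\<le>d. deriv_weight d k * peval n c (\<lambda>j. y j + real k * u j))"
proof -
  obtain Q where Q: "degree Q \<le> d" "\<And>s. poly Q s = peval n c (\<lambda>j. y j + s * u j)"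
    using peval_along_line_poly by blast
  have "poly Q = (\<lambda>s. eval_pexpr e (\<lambda>j. y j + s * u j))"
    using Q(2) assms by auto
  then have "(poly Q has_real_derivative eval_pexpr (dir_deriv e u) y) (at 0)"
    using has_real_derivative_eval_pexpr_line[of e y u 0] by simp
  with has_real_derivative_poly_0_interpolation[OF Q(1)] show ?thesis
    by (simp add: DERIV_unique Q(2))
qed

lemma eval_second_dir_deriv_interpolation:
  assumes "eval_pexpr e = peval n c"
  shows "eval_pexpr (dir_deriv (dir_deriv e u) v) y =
    (\<Sum>k\<le>d. deriv_weight d k * (\<Sum>l\<le>d. deriv_weight d l *
       peval n c (\<lambda>j. y j + real k * u j + real l * v j)))"
proof -
  have "(\<lambda>s. eval_pexpr (dir_deriv e u) (\<lambda>j. y j + s * v j)) =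
      (\<lambda>s. \<Sum>k\<le>d. deriv_weight d k * eval_pexpr e (\<lambda>j. (y j + real k * u j) + s * v j))"
    by (simp add: fun_eq_iff eval_dir_deriv_interpolation[OF assms] assms algebra_simps)
  moreover have "((\<lambda>s. \<Sum>k\<le>d. deriv_weight d k * eval_pexpr e (\<lambda>j. (y j + real k * u j) + s * v j))
      has_real_derivative
      (\<Sum>k\<le>d. deriv_weight d k * eval_pexpr (dir_deriv e v) (\<lambda>j. y j + real k * u j))) (at 0)"
    by (intro DERIV_sum DERIV_cmult) (rule has_real_derivative_eval_pexpr_line[of _ _ _ 0, simplified])
  ultimately have "((\<lambda>s. eval_pexpr (dir_deriv e u) (\<lambda>j. y j + s * v j)) has_real_derivative
      (\<Sum>k\<le>d. deriv_weight d k * eval_pexpr (dir_deriv e v) (\<lambda>j. y j + real k * u j))) (at 0)"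
    by simp
  with has_real_derivative_eval_pexpr_line[of "dir_deriv e u" y v 0] show ?thesis
    by (simp add: DERIV_unique eval_dir_deriv_interpolation[OF assms] algebra_simps)
qed

end

section \<open>The Hessian of the logarithmic barrier\<close>

lemma has_real_derivative_ln_abs:
  assumes "(g has_real_derivative g') (at t)" and "g t \<noteq> 0"
  shows "((\<lambda>t. ln \<bar>g t\<bar>) has_real_derivative g' / g t) (at t)"
proof -
  have ln_abs: "(\<lambda>t. ln \<bar>g t\<bar>) = (\<lambda>t. ln ((g t)\<^sup>2) / 2)"
    by (simp add: fun_eq_iff ln_realpow abs_if ln_minus)
  have "0 < (g t)\<^sup>2" using assms(2) by simp
  then show ?thesis
    unfolding ln_abs using assms
    by (auto intro!: derivative_eq_intros simp: field_simps power2_eq_square)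
qed

lemma has_real_derivative_neg_ln_abs_eval_pexpr_line:
  assumes "eval_pexpr e y \<noteq> 0"
  shows "((\<lambda>t. - ln \<bar>eval_pexpr e (\<lambda>k. y k + t * u k)\<bar>) has_real_derivative
    - eval_pexpr (dir_deriv e u) y / eval_pexpr e y) (at 0)"
  using DERIV_minus[OF has_real_derivative_ln_abs[OF has_real_derivative_eval_pexpr_line[of e y u 0]]]
    assms by simp

lemma hess_entry_neg_ln_abs_eval_pexpr:
  assumes "eval_pexpr e x \<noteq> 0"
  shows "hess_entry (\<lambda>y. - ln \<bar>eval_pexpr e y\<bar>) x i j =
    eval_pexpr (dir_deriv e (indicator {i})) x * eval_pexpr (dir_deriv e (indicator {j})) x
      / (eval_pexpr e x)\<^sup>2
    - eval_pexpr (dir_deriv (dir_deriv e (indicator {i})) (indicator {j})) x / eval_pexpr e x"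
proof -
  let ?P = "eval_pexpr e" and ?Di = "eval_pexpr (dir_deriv e (indicator {i}))"
  define y where "y s = (\<lambda>k. x k + s * indicator {j} k)" for s :: real
  have point: "(x(j := x j + s))(i := (x(j := x j + s)) i + t) = (\<lambda>k. y s k + t * indicator {i} k)"
    for s t by (auto simp: y_def fun_eq_iff)
  have "isCont (\<lambda>s. ?P (y s)) 0"
    using has_real_derivative_eval_pexpr_line unfolding y_def by (rule DERIV_isCont)
  then have "((\<lambda>s. ?P (y s)) \<longlongrightarrow> ?P (y 0)) (nhds 0)"
    using tendsto_at_iff_tendsto_nhds[of "\<lambda>s. ?P (y s)" 0] by (simp add: isCont_def)
  then have "\<forall>\<^sub>F s in nhds 0. ?P (y s) \<noteq> 0"
    using assms by (intro tendsto_imp_eventually_ne) (auto simp: y_def)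
  then have "\<forall>\<^sub>F s in nhds 0.
      deriv (\<lambda>t. - ln \<bar>?P ((x(j := x j + s))(i := (x(j := x j + s)) i + t))\<bar>) 0
        = - ?Di (y s) / ?P (y s)"
    by eventually_elim
      (unfold point, intro DERIV_imp_deriv has_real_derivative_neg_ln_abs_eval_pexpr_line)
  moreover have "((\<lambda>s. - ?Di (y s) / ?P (y s)) has_real_derivative
      ?Di x * eval_pexpr (dir_deriv e (indicator {j})) x / (?P x)\<^sup>2
      - eval_pexpr (dir_deriv (dir_deriv e (indicator {i})) (indicator {j})) x / ?P x) (at 0)"
    using assms unfolding y_def
    by (auto intro!: derivative_eq_intros has_real_derivative_eval_pexpr_line[of _ x _ 0, simplified]
        simp: field_simps power2_eq_square)
  ultimately show ?thesis
    unfolding hess_entry_def by (intro DERIV_imp_deriv) (simp add: DERIV_cong_ev)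
qed

lemma hess_vec_neg_ln_abs_eval_pexpr:
  assumes "vars_below n e" and "eval_pexpr e x \<noteq> 0"
  shows "hess_vec n (\<lambda>y. - ln \<bar>eval_pexpr e y\<bar>) x w i =
    eval_pexpr (dir_deriv e (indicator {i})) x * eval_pexpr (dir_deriv e w) x / (eval_pexpr e x)\<^sup>2
    - eval_pexpr (dir_deriv (dir_deriv e (indicator {i})) w) x / eval_pexpr e x"
  using assms
  by (simp add: hess_vec_def hess_entry_neg_ln_abs_eval_pexpr
      eval_dir_deriv_linear[of n e w] eval_dir_deriv_linear[of n "dir_deriv e _" w] vars_below_dir_deriv
      sum_subtractf sum_divide_distrib sum_distrib_left algebra_simps)

lemma hess_vec_neg_ln_peval_interpolation:
  fixes x w :: "nat \<Rightarrow> real" and i :: nat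
  assumes "is_poly n c" and "\<And>\<alpha>. c \<alpha> \<noteq> 0 \<Longrightarrow> (\<Sum>i<n. \<alpha> i) \<le> d" and "peval n c x \<noteq> 0"
  defines "q k l \<equiv> peval n c (\<lambda>j. x j + real l * w j + real k * indicator {i} j)"
  shows "hess_vec n (\<lambda>y. - ln \<bar>peval n c y\<bar>) x w i =
    (\<Sum>k\<le>d. deriv_weight d k * q k 0) * (\<Sum>l\<le>d. deriv_weight d l * q 0 l) / (q 0 0)\<^sup>2
    - (\<Sum>k\<le>d. deriv_weight d k * (\<Sum>l\<le>d. deriv_weight d l * q k l)) / q 0 0"
proof -
  obtain e where e: "vars_below n e" "eval_pexpr e = peval n c"
    using poly_fun_peval[OF assms(1)] unfolding poly_fun_def by blast
  have "hess_vec n (\<lambda>y. - ln \<bar>peval n c y\<bar>) x w i =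
    eval_pexpr (dir_deriv e (indicator {i})) x * eval_pexpr (dir_deriv e w) x / (peval n c x)\<^sup>2
    - eval_pexpr (dir_deriv (dir_deriv e (indicator {i})) w) x / peval n c x"
    using hess_vec_neg_ln_abs_eval_pexpr[OF e(1)] assms(3) e(2) by simp
  then show ?thesis
    by (simp add: q_def eval_dir_deriv_interpolation[OF assms(1,2) e(2)]
        eval_second_dir_deriv_interpolation[OF assms(1,2) e(2)] add_ac)
qed

section \<open>Straight-line programs\<close>

fun instr_value :: "((nat \<Rightarrow> complex) \<Rightarrow> complex) \<Rightarrow> (nat \<Rightarrow> real) \<Rightarrow> (nat \<Rightarrow> real)
    \<Rightarrow> (nat \<Rightarrow> complex) \<Rightarrow> instr \<Rightarrow> complex" where
  "instr_value orc x w R (IConst a) = a"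
| "instr_value orc x w R (IX i) = of_real (x i)"
| "instr_value orc x w R (IW i) = of_real (w i)"
| "instr_value orc x w R (IAdd a b) = R a + R b"
| "instr_value orc x w R (ISub a b) = R a - R b"
| "instr_value orc x w R (IMul a b) = R a * R b"
| "instr_value orc x w R (IDiv a b) = R a / R b"
| "instr_value orc x w R (IOracle args) = orc (\<lambda>i. if i < length args then R (args ! i) else 0)"

fun instr_reads :: "instr \<Rightarrow> nat set" where
  "instr_reads (IAdd a b) = {a, b}"
| "instr_reads (ISub a b) = {a, b}"
| "instr_reads (IMul a b) = {a, b}"
| "instr_reads (IDiv a b) = {a, b}"
| "instr_reads (IOracle args) = set args"
| "instr_reads _ = {}"

lemma step_eq_append_instr_value: "step orc x w rs ins = rs @ [instr_value orc x w (reg rs) ins]"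
  by (cases ins) auto

lemma instr_value_cong:
  "(\<And>a. a \<in> instr_reads ins \<Longrightarrow> R a = R' a) \<Longrightarrow> instr_value orc x w R ins = instr_value orc x w R' ins"
  by (cases ins) (auto intro!: arg_cong[where f = orc])

lemma foldl_step_extends: "\<exists>zs. foldl (step orc x w) rs P = rs @ zs"
  by (induction P arbitrary: rs) (simp, metis append.assoc step_eq_append_instr_value foldl_Cons)

lemma length_foldl_step: "length (foldl (step orc x w) rs P) = length rs + length P"
  by (induction P arbitrary: rs) (auto simp: step_eq_append_instr_value)

lemma length_concat_map_const:
  "(\<And>q. length (f q) = S) \<Longrightarrow> length (concat (map f xs)) = length xs * S"
  by (induction xs) simp_all

definition code_at :: "instr list \<Rightarrow> nat \<Rightarrow> instr list \<Rightarrow> bool" where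
  "code_at P m B \<longleftrightarrow> (\<exists>A C. P = A @ B @ C \<and> length A = m)"

lemma code_at_append:
  assumes "code_at P m (B @ B')"
  shows "code_at P m B" and "code_at P (m + length B) B'"
  using assms unfolding code_at_def by (metis append.assoc length_append)+

lemma code_at_Cons:
  assumes "code_at P m (ins # B)"
  shows "code_at P m [ins]" and "code_at P (Suc m) B"
  using code_at_append[of P m "[ins]" B] assms by simp_all

lemma code_at_concat:
  assumes "code_at P m (concat (map f [0..<N]))" and "\<And>q. length (f q) = S" and "q < N"
  shows "code_at P (m + q * S) (f q)"
proof -
  obtain A C where P: "P = A @ concat (map f [0..<N]) @ C" and A: "length A = m"
    using assms(1) unfolding code_at_def by blast
  have "[0..<N] = [0..<q] @ q # [Suc q..<N]"
    using assms(3) upt_add_eq_append[of 0 q "N - q"] upt_conv_Cons[of q N] by simp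
  then have "P = (A @ concat (map f [0..<q])) @ f q @ (concat (map f [Suc q..<N]) @ C)"
    by (simp add: P)
  then show ?thesis
    unfolding code_at_def using A length_concat_map_const[where xs = "[0..<q]", OF assms(2)]
    by (intro exI[of _ "A @ concat (map f [0..<q])"] exI[of _ "concat (map f [Suc q..<N]) @ C"]) simp
qed

text \<open>Register m holds the partial sum; the code starts at register \<open>m + 1\<close>.\<close>

fun lincomb_steps :: "nat \<Rightarrow> (real \<times> nat) list \<Rightarrow> instr list" where
  "lincomb_steps m [] = []"
| "lincomb_steps m ((a, r) # ts) =
     [IConst (of_real a), IMul (m + 1) r, IAdd m (m + 2)] @ lincomb_steps (m + 3) ts"

lemma length_lincomb_steps [simp]: "length (lincomb_steps m ts) = 3 * length ts"
  by (induction m ts rule: lincomb_steps.induct) simp_all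

definition lincomb_code :: "nat \<Rightarrow> (real \<times> nat) list \<Rightarrow> instr list" where
  "lincomb_code m ts = IConst 0 # lincomb_steps m ts"

definition line_point_code :: "nat \<Rightarrow> nat \<Rightarrow> nat \<Rightarrow> instr list" where
  "line_point_code m j l = [IX j, IW j, IConst (of_nat l), IMul (m + 1) (m + 2), IAdd m (m + 3)]"

definition hess_formula_code :: "nat \<Rightarrow> nat \<Rightarrow> nat \<Rightarrow> nat \<Rightarrow> nat \<Rightarrow> instr list" where
  "hess_formula_code m p g dw h = [IMul g dw, IMul p p, IDiv m (m + 1), IDiv h p, ISub (m + 2) (m + 3)]"

context
  fixes orc :: "(nat \<Rightarrow> complex) \<Rightarrow> complex" and x w :: "nat \<Rightarrow> real" and P :: "instr list"
begin

abbreviation run_reg :: "nat \<Rightarrow> complex" where "run_reg \<equiv> reg (run orc x w P)"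

lemma reg_run_code_at:
  assumes "code_at P m [ins]" and "\<forall>a \<in> instr_reads ins. a < m"
  shows "run_reg m = instr_value orc x w run_reg ins"
proof -
  obtain A C where P: "P = A @ [ins] @ C" and m: "length A = m"
    using assms(1) unfolding code_at_def by blast
  define rs where "rs = run orc x w A"
  obtain zs where run: "run orc x w P = (rs @ [instr_value orc x w (reg rs) ins]) @ zs"
    using foldl_step_extends[of orc x w "rs @ [_]" C]
    unfolding P run_def rs_def by (auto simp: step_eq_append_instr_value)
  have len: "length rs = m"
    using m by (simp add: rs_def run_def length_foldl_step)
  have earlier: "reg rs a = run_reg a" if "a < m" for a
    using that len by (simp add: run reg_def nth_append)
  have "run_reg m = instr_value orc x w (reg rs) ins"
    using len by (simp add: run reg_def nth_append)
  also have "\<dots> = instr_value orc x w run_reg ins"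
    using assms(2) earlier by (auto intro: instr_value_cong)
  finally show ?thesis .
qed

lemma reg_run_code_at_nth:
  assumes "code_at P m B" and "i < length B" and "\<forall>a \<in> instr_reads (B ! i). a < m + i"
  shows "run_reg (m + i) = instr_value orc x w run_reg (B ! i)"
proof -
  have "code_at P m (take i B @ B ! i # drop (Suc i) B)"
    using assms(1,2) by (simp add: Cons_nth_drop_Suc)
  then have "code_at P (m + i) [B ! i]"
    using code_at_append(2) code_at_Cons(1) assms(2) by fastforce
  then show ?thesis using assms(3) by (simp add: reg_run_code_at)
qed

lemma reg_run_lincomb_steps:
  assumes "code_at P (Suc m) (lincomb_steps m ts)" and "\<forall>(a, r) \<in> set ts. r \<le> m"
  shows "run_reg (m + 3 * length ts) = run_reg m + (\<Sum>(a, r)\<leftarrow>ts. of_real a * run_reg r)"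
  using assms
proof (induction ts arbitrary: m)
  case (Cons t ts)
  obtain a r where t: "t = (a, r)" by fastforce
  let ?B = "[IConst (of_real a), IMul (m + 1) r, IAdd m (m + 2)] @ lincomb_steps (m + 3) ts"
  have B: "code_at P (Suc m) ?B" and r: "r \<le> m"
    using Cons.prems by (simp_all add: t)
  have step: "run_reg (Suc m + 0) = of_real a" "run_reg (Suc m + 1) = run_reg (m + 1) * run_reg r"
    "run_reg (Suc m + 2) = run_reg m + run_reg (m + 2)"
    using reg_run_code_at_nth[OF B, of 0] reg_run_code_at_nth[OF B, of 1]
      reg_run_code_at_nth[OF B, of 2] r
    by auto
  have "code_at P (Suc (m + 3)) (lincomb_steps (m + 3) ts)"
    using code_at_append(2)[OF B] by (simp add: eval_nat_numeral)
  moreover have "\<forall>(a, r) \<in> set ts. r \<le> m + 3"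
    using Cons.prems(2) by auto
  ultimately have "run_reg (m + 3 + 3 * length ts) =
      run_reg (m + 3) + (\<Sum>(a, r)\<leftarrow>ts. of_real a * run_reg r)"
    using Cons.IH by blast
  with step show ?case by (simp add: t algebra_simps eval_nat_numeral)
qed simp

lemma reg_run_lincomb_code:
  assumes "code_at P m (lincomb_code m (map (\<lambda>t. (a t, r t)) ts))"
    and "\<And>t. t \<in> set ts \<Longrightarrow> r t < m \<and> run_reg (r t) = of_real (v t)"
  shows "run_reg (m + 3 * length ts) = of_real (\<Sum>t\<leftarrow>ts. a t * v t)"
proof -
  have "run_reg m = 0"
    using reg_run_code_at_nth[OF assms(1), of 0] by (simp add: lincomb_code_def)
  moreover have "\<forall>(a, r) \<in> set (map (\<lambda>t. (a t, r t)) ts). r \<le> m"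
    using assms(2) by fastforce
  ultimately have "run_reg (m + 3 * length ts) = (\<Sum>t\<leftarrow>ts. of_real (a t) * run_reg (r t))"
    using reg_run_lincomb_steps[OF code_at_Cons(2)[OF assms(1)[unfolded lincomb_code_def]]]
    by (simp add: o_def)
  also have "\<dots> = (\<Sum>t\<leftarrow>ts. of_real (a t * v t))"
    using assms(2) by (intro arg_cong[where f = sum_list] map_cong) auto
  also have "\<dots> = of_real (\<Sum>t\<leftarrow>ts. a t * v t)"
    by (induction ts) simp_all
  finally show ?thesis .
qed

lemma reg_run_line_point_code:
  assumes "code_at P m (line_point_code m j l)"
  shows "run_reg (m + 4) = of_real (x j + real l * w j)"
  using reg_run_code_at_nth[OF assms, of 4] reg_run_code_at_nth[OF assms, of 3]
    reg_run_code_at_nth[OF assms, of 2] reg_run_code_at_nth[OF assms, of 1]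
    reg_run_code_at_nth[OF assms, of 0]
  by (simp add: line_point_code_def numeral_eq_Suc)

lemma reg_run_hess_formula_code:
  assumes "code_at P m (hess_formula_code m p g dw h)" and "p < m" "g < m" "dw < m" "h < m"
  shows "run_reg (m + 4) = run_reg g * run_reg dw / (run_reg p * run_reg p) - run_reg h / run_reg p"
  using reg_run_code_at_nth[OF assms(1), of 4] reg_run_code_at_nth[OF assms(1), of 3]
    reg_run_code_at_nth[OF assms(1), of 2] reg_run_code_at_nth[OF assms(1), of 1]
    reg_run_code_at_nth[OF assms(1), of 0] assms(2-)
  by (simp add: hess_formula_code_def numeral_eq_Suc)

end

lemma prog_cost_le_length: "1 \<le> T \<Longrightarrow> prog_cost T P \<le> real (length P) * T"
proof (induction P)
  case (Cons ins P)
  have "instr_cost T ins \<le> T" using Cons.prems by (cases ins) auto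
  then show ?case using Cons by (simp add: prog_cost_def algebra_simps)
qed (simp add: prog_cost_def)

section \<open>A program for the Hessian-vector product\<close>

lemma index_pair_less:
  fixes k l :: nat
  assumes "k < K" and "l < L"
  shows "k * L + l < K * L"
proof -
  have "k * L + l < Suc k * L" using assms(2) by simp
  also have "\<dots> \<le> K * L" using assms(1) by (metis Suc_leI mult_le_mono1)
  finally show ?thesis .
qed

lemma sum_list_map_upt: "sum_list (map f [0..<n]) = (\<Sum>k<n. f k)"
  by (induction n) simp_all

lemma sum_list_map_product:
  "sum_list (map f (List.product xs ys)) = (\<Sum>x\<leftarrow>xs. \<Sum>y\<leftarrow>ys. f (x, y))"
  by (induction xs) (simp_all add: o_def)

definition probe_code :: "nat \<Rightarrow> nat \<Rightarrow> (nat \<Rightarrow> nat) \<Rightarrow> nat \<Rightarrow> nat \<Rightarrow> instr list" where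
  "probe_code n m V i k = [IConst (of_nat k), IAdd (V i) m, IOracle ((map V [0..<n])[i := m + 1])]"

lemma reg_run_probe_code:
  assumes "code_at P m (probe_code n m V i k)" and "i < n"
    and "\<And>j. j < n \<Longrightarrow> V j < m \<and> run_reg (peval n c) x w P (V j) = of_real (z j)"
  shows "run_reg (peval n c) x w P (m + 2) = of_real (peval n c (\<lambda>j. z j + real k * indicator {i} j))"
proof -
  let ?R = "run_reg (peval n c) x w P"
  have "?R (m + 1) = of_real (z i + real k)"
    using reg_run_code_at_nth[where orc = "peval n c" and x = x and w = w, OF assms(1), of 0]
      reg_run_code_at_nth[where orc = "peval n c" and x = x and w = w, OF assms(1), of 1]
      assms(3)[OF assms(2)]
    by (simp add: probe_code_def)
  moreover have "\<forall>a \<in> set ((map V [0..<n])[i := m + 1]). a < m + 2"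
  proof
    fix a assume "a \<in> set ((map V [0..<n])[i := m + 1])"
    then have "a \<in> insert (m + 1) (V ` {0..<n})"
      using set_update_subset_insert[of "map V [0..<n]" i "m + 1"] by auto
    then show "a < m + 2"
      using assms(3) by force
  qed
  ultimately have "?R (m + 2) = peval n c (\<lambda>j. of_real (z j + real k * indicator {i} j))"
    using reg_run_code_at_nth[where orc = "peval n c" and x = x and w = w, OF assms(1), of 2] assms(2,3)
    by (auto simp: probe_code_def nth_list_update intro!: peval_cong)
  then show ?thesis unfolding peval_of_real .
qed

definition line_point_reg :: "nat \<Rightarrow> nat \<Rightarrow> nat \<Rightarrow> nat" where
  "line_point_reg n l j = 5 * (l * n + j) + 4"

definition line_points_code :: "nat \<Rightarrow> nat \<Rightarrow> instr list" where
  "line_points_code n d =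
     concat (map (\<lambda>q. line_point_code (5 * q) (q mod n) (q div n)) [0..<Suc d * n])"

lemma length_line_points_code: "length (line_points_code n d) = 5 * Suc d * n"
  by (simp add: line_points_code_def line_point_code_def length_concat_map_const algebra_simps)

lemma line_point_reg_less:
  assumes "l \<le> d" and "j < n"
  shows "line_point_reg n l j < 5 * Suc d * n"
proof -
  have "l * n + j < Suc d * n" using assms by (intro index_pair_less) auto
  then show ?thesis unfolding line_point_reg_def by (simp add: algebra_simps)
qed

lemma reg_run_line_points_code:
  assumes "code_at P 0 (line_points_code n d)" and "l \<le> d" and "j < n"
  shows "run_reg orc x w P (line_point_reg n l j) = of_real (x j + real l * w j)"
proof -
  let ?q = "l * n + j"
  have "?q < Suc d * n"
    using assms(2,3) by (intro index_pair_less) auto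
  then have "code_at P (5 * ?q) (line_point_code (5 * ?q) (?q mod n) (?q div n))"
    using code_at_concat[OF assms(1)[unfolded line_points_code_def], of 5 ?q]
    by (simp add: line_point_code_def mult.commute)
  then show ?thesis
    using reg_run_line_point_code assms(3) by (simp add: line_point_reg_def)
qed

definition grid_reg :: "nat \<Rightarrow> nat \<Rightarrow> nat \<Rightarrow> nat \<Rightarrow> nat" where
  "grid_reg d b k l = b + 3 * (k * Suc d + l) + 2"

definition grid_code :: "nat \<Rightarrow> nat \<Rightarrow> nat \<Rightarrow> nat \<Rightarrow> instr list" where
  "grid_code n d i b =
     concat (map (\<lambda>q. probe_code n (b + 3 * q) (line_point_reg n (q mod Suc d)) i (q div Suc d))
       [0..<Suc d * Suc d])"

lemma length_grid_code: "length (grid_code n d i b) = 3 * Suc d * Suc d"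
  by (simp add: grid_code_def probe_code_def length_concat_map_const algebra_simps)

lemma grid_reg_less: "k \<le> d \<Longrightarrow> l \<le> d \<Longrightarrow> grid_reg d b k l < b + length (grid_code n d i b)"
  using index_pair_less[of k "Suc d" l "Suc d"]
  by (simp add: grid_reg_def length_grid_code algebra_simps)

lemma reg_run_grid_code:
  assumes "code_at P 0 (line_points_code n d)" and "code_at P b (grid_code n d i b)"
    and "5 * Suc d * n \<le> b" and "i < n" and "k \<le> d" and "l \<le> d"
  shows "run_reg (peval n c) x w P (grid_reg d b k l) =
    of_real (peval n c (\<lambda>j. x j + real l * w j + real k * indicator {i} j))"
proof -
  let ?q = "k * Suc d + l"
  have "?q < Suc d * Suc d"
    using assms(5,6) by (intro index_pair_less) auto
  moreover have
    "\<And>q. length (probe_code n (b + 3 * q) (line_point_reg n (q mod Suc d)) i (q div Suc d)) = 3"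
    by (simp add: probe_code_def)
  ultimately have "code_at P (b + ?q * 3)
      (probe_code n (b + 3 * ?q) (line_point_reg n (?q mod Suc d)) i (?q div Suc d))"
    using code_at_concat[OF assms(2)[unfolded grid_code_def]] by blast
  moreover have "?q mod Suc d = l" "?q div Suc d = k"
    using assms(6) by (simp_all del: mult_Suc_right)
  ultimately have code: "code_at P (b + 3 * ?q) (probe_code n (b + 3 * ?q) (line_point_reg n l) i k)"
    by (simp only: mult.commute)
  have points: "line_point_reg n l j < b + 3 * ?q \<and>
      run_reg (peval n c) x w P (line_point_reg n l j) = of_real (x j + real l * w j)" if "j < n" for j
    using line_point_reg_less[OF assms(6) that] assms(3) reg_run_line_points_code[OF assms(1,6) that]
    by simp
  show ?thesis
    using reg_run_probe_code[where z = "\<lambda>j. x j + real l * w j", OF code assms(4) points]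
    by (simp add: grid_reg_def)
qed

text \<open>Each block leaves its result in its last register.\<close>

definition coord_code :: "nat \<Rightarrow> nat \<Rightarrow> nat \<Rightarrow> nat \<Rightarrow> instr list" where
  "coord_code n d i b =
    (let grid = grid_code n d i b;
         s_i = b + length grid;
         lin_i = lincomb_code s_i (map (\<lambda>k. (deriv_weight d k, grid_reg d b k 0)) [0..<Suc d]);
         s_w = s_i + length lin_i;
         lin_w = lincomb_code s_w (map (\<lambda>l. (deriv_weight d l, grid_reg d b 0 l)) [0..<Suc d]);
         s_iw = s_w + length lin_w;
         lin_iw = lincomb_code s_iw (map (\<lambda>t. (deriv_weight d (fst t) * deriv_weight d (snd t),
           grid_reg d b (fst t) (snd t))) (List.product [0..<Suc d] [0..<Suc d]));
         s_out = s_iw + length lin_iw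
     in grid @ lin_i @ lin_w @ lin_iw @
        hess_formula_code s_out (grid_reg d b 0 0) (s_w - 1) (s_iw - 1) (s_out - 1))"

definition coord_len :: "nat \<Rightarrow> nat" where
  "coord_len d = 6 * Suc d * Suc d + 6 * Suc d + 8"

lemma length_coord_code: "length (coord_code n d i b) = coord_len d"
  by (simp add: coord_code_def coord_len_def Let_def length_grid_code lincomb_code_def
      hess_formula_code_def algebra_simps)

lemma code_at_coord_code:
  assumes "code_at P b (coord_code n d i b)"
  defines "s_i \<equiv> b + 3 * Suc d * Suc d"
  defines "s_w \<equiv> s_i + 3 * Suc d + 1"
  defines "s_iw \<equiv> s_w + 3 * Suc d + 1"
  defines "s_out \<equiv> s_iw + 3 * Suc d * Suc d + 1"
  shows "code_at P b (grid_code n d i b)"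
    and "code_at P s_i (lincomb_code s_i (map (\<lambda>k. (deriv_weight d k, grid_reg d b k 0)) [0..<Suc d]))"
    and "code_at P s_w (lincomb_code s_w (map (\<lambda>l. (deriv_weight d l, grid_reg d b 0 l)) [0..<Suc d]))"
    and "code_at P s_iw (lincomb_code s_iw (map (\<lambda>t. (deriv_weight d (fst t) * deriv_weight d (snd t),
      grid_reg d b (fst t) (snd t))) (List.product [0..<Suc d] [0..<Suc d])))"
    and "code_at P s_out (hess_formula_code s_out (grid_reg d b 0 0) (s_w - 1) (s_iw - 1) (s_out - 1))"
proof -
  let ?lin_i = "lincomb_code s_i (map (\<lambda>k. (deriv_weight d k, grid_reg d b k 0)) [0..<Suc d])"
  let ?lin_w = "lincomb_code s_w (map (\<lambda>l. (deriv_weight d l, grid_reg d b 0 l)) [0..<Suc d])"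
  let ?lin_iw = "lincomb_code s_iw (map (\<lambda>t. (deriv_weight d (fst t) * deriv_weight d (snd t),
      grid_reg d b (fst t) (snd t))) (List.product [0..<Suc d] [0..<Suc d]))"
  let ?out = "hess_formula_code s_out (grid_reg d b 0 0) (s_w - 1) (s_iw - 1) (s_out - 1)"
  have pos: "b + length (grid_code n d i b) = s_i" "s_i + length ?lin_i = s_w"
    "s_w + length ?lin_w = s_iw" "s_iw + length ?lin_iw = s_out"
    by (simp_all add: s_i_def s_w_def s_iw_def s_out_def length_grid_code lincomb_code_def
        algebra_simps del: upt_Suc)
  have "code_at P b (grid_code n d i b @ ?lin_i @ ?lin_w @ ?lin_iw @ ?out)"
    using assms(1) unfolding coord_code_def Let_def pos .
  then show "code_at P b (grid_code n d i b)" and "code_at P s_i ?lin_i" and "code_at P s_w ?lin_w"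
    and "code_at P s_iw ?lin_iw" and "code_at P s_out ?out"
    unfolding pos[symmetric] by (blast dest: code_at_append)+
qed

lemma reg_run_coord_code:
  fixes c :: "(nat \<Rightarrow> nat) \<Rightarrow> real" and x w :: "nat \<Rightarrow> real"
  assumes "code_at P 0 (line_points_code n d)" and "code_at P b (coord_code n d i b)"
    and "5 * Suc d * n \<le> b" and "i < n"
  defines "q k l \<equiv> peval n c (\<lambda>j. x j + real l * w j + real k * indicator {i} j)"
  shows "run_reg (peval n c) x w P (b + coord_len d - 1) = of_real (
    (\<Sum>k\<le>d. deriv_weight d k * q k 0) * (\<Sum>l\<le>d. deriv_weight d l * q 0 l) / (q 0 0)\<^sup>2
    - (\<Sum>k\<le>d. deriv_weight d k * (\<Sum>l\<le>d. deriv_weight d l * q k l)) / q 0 0)"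
proof -
  let ?R = "run_reg (peval n c) x w P" and ?K = "Suc d" and ?ks = "[0..<Suc d]"
  define s_i where "s_i = b + 3 * ?K * ?K"
  define s_w where "s_w = s_i + 3 * ?K + 1"
  define s_iw where "s_iw = s_w + 3 * ?K + 1"
  define s_out where "s_out = s_iw + 3 * ?K * ?K + 1"
  note code = code_at_coord_code[OF assms(2), folded s_i_def s_w_def s_iw_def, folded s_out_def]
  have grid_less: "grid_reg d b k l < s_i" and grid: "?R (grid_reg d b k l) = of_real (q k l)"
    if "k \<le> d" "l \<le> d" for k l
    using grid_reg_less[where b = b and n = n and i = i, OF that]
      reg_run_grid_code[OF assms(1) code(1) assms(3,4) that]
    by (simp_all add: length_grid_code s_i_def q_def)
  have "?R (s_i + 3 * length ?ks) = of_real (\<Sum>k\<leftarrow>?ks. deriv_weight d k * q k 0)"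
    by (rule reg_run_lincomb_code[OF code(2)]) (auto simp: grid_less grid)
  moreover have "?R (s_w + 3 * length ?ks) = of_real (\<Sum>l\<leftarrow>?ks. deriv_weight d l * q 0 l)"
    by (rule reg_run_lincomb_code[OF code(3)])
      (auto intro: order_less_le_trans[OF grid_less] simp: s_w_def grid)
  moreover have "?R (s_iw + 3 * length (List.product ?ks ?ks)) =
      of_real (\<Sum>t\<leftarrow>List.product ?ks ?ks.
        deriv_weight d (fst t) * deriv_weight d (snd t) * q (fst t) (snd t))"
    by (rule reg_run_lincomb_code[OF code(4)])
      (auto intro: order_less_le_trans[OF grid_less] simp: s_iw_def s_w_def grid)
  ultimately have sums: "?R (s_w - 1) = of_real (\<Sum>k\<le>d. deriv_weight d k * q k 0)"
    "?R (s_iw - 1) = of_real (\<Sum>l\<le>d. deriv_weight d l * q 0 l)"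
    "?R (s_out - 1) = of_real (\<Sum>k\<le>d. deriv_weight d k * (\<Sum>l\<le>d. deriv_weight d l * q k l))"
    by (simp_all add: s_w_def s_iw_def s_out_def sum_list_map_upt sum_list_map_product
        lessThan_Suc_atMost sum_distrib_left algebra_simps del: upt_Suc)
  have out: "b + coord_len d - 1 = s_out + 4"
    by (simp add: s_out_def s_iw_def s_w_def s_i_def coord_len_def)
  have formula: "?R (s_out + 4) = ?R (s_w - 1) * ?R (s_iw - 1) /
      (?R (grid_reg d b 0 0) * ?R (grid_reg d b 0 0)) - ?R (s_out - 1) / ?R (grid_reg d b 0 0)"
    using grid_less[of 0 0]
    by (intro reg_run_hess_formula_code[OF code(5)]) (auto simp: s_out_def s_iw_def s_w_def)
  have "?R (grid_reg d b 0 0) = of_real (q 0 0)"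
    using grid by simp
  then show ?thesis
    unfolding out formula sums by (simp add: power2_eq_square)
qed

definition hess_prog :: "nat \<Rightarrow> nat \<Rightarrow> instr list" where
  "hess_prog n d = line_points_code n d @
     concat (map (\<lambda>i. coord_code n d i (5 * Suc d * n + i * coord_len d)) [0..<n])"

definition hess_out :: "nat \<Rightarrow> nat \<Rightarrow> nat \<Rightarrow> nat" where
  "hess_out n d i = 5 * Suc d * n + i * coord_len d + coord_len d - 1"

lemma reg_run_hess_prog:
  assumes "is_poly n c" and "\<And>\<alpha>. c \<alpha> \<noteq> 0 \<Longrightarrow> (\<Sum>i<n. \<alpha> i) \<le> d"
    and "peval n c x \<noteq> 0" and "i < n"
  shows "reg (run (peval n c) x w (hess_prog n d)) (hess_out n d i) =
    of_real (hess_vec n (\<lambda>y. - ln \<bar>peval n c y\<bar>) x w i)"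
proof -
  let ?P = "hess_prog n d" and ?b = "5 * Suc d * n + i * coord_len d"
  let ?coords = "concat (map (\<lambda>i. coord_code n d i (5 * Suc d * n + i * coord_len d)) [0..<n])"
  have "code_at ?P 0 (line_points_code n d @ ?coords)"
    unfolding code_at_def hess_prog_def by (intro exI[of _ "[]"]) simp
  then have points: "code_at ?P 0 (line_points_code n d)"
    and coords: "code_at ?P (5 * Suc d * n) ?coords"
    using code_at_append[of ?P 0 "line_points_code n d" ?coords]
    by (simp_all add: length_line_points_code)
  have "code_at ?P ?b (coord_code n d i ?b)"
    using code_at_concat[OF coords length_coord_code assms(4)] .
  then show ?thesis
    using reg_run_coord_code[OF points _ _ assms(4), of ?b c x w]
      hess_vec_neg_ln_peval_interpolation[OF assms(1,2,3), of w i]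
    by (simp add: hess_out_def)
qed

lemma prog_cost_hess_prog:
  assumes "0 < d" and "1 \<le> T"
  shows "prog_cost T (hess_prog n d) \<le> 54 * real n * real d ^ 2 * T"
proof -
  have "d \<le> d * d" and "1 \<le> d * d" using assms(1) by simp_all
  moreover have "5 * Suc d + coord_len d = 6 * (d * d) + 23 * d + 25"
    by (simp add: coord_len_def algebra_simps)
  ultimately have "5 * Suc d + coord_len d \<le> 54 * (d * d)" by linarith
  then have "n * (5 * Suc d + coord_len d) \<le> n * (54 * (d * d))" by simp
  then have "length (hess_prog n d) \<le> 54 * n * d ^ 2"
    by (simp add: hess_prog_def length_line_points_code length_concat_map_const length_coord_code
        power2_eq_square algebra_simps)
  then have "real (length (hess_prog n d)) \<le> real (54 * n * d ^ 2)"
    by (simp only: of_nat_le_iff)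
  then have "real (length (hess_prog n d)) \<le> 54 * real n * real d ^ 2"
    by simp
  then have "real (length (hess_prog n d)) * T \<le> 54 * real n * real d ^ 2 * T"
    using assms(2) by (intro mult_right_mono) simp_all
  then show ?thesis
    using prog_cost_le_length[OF assms(2), of "hess_prog n d"] by linarith
qed

theorem lemmaD3:
  "\<exists>C::real. \<forall>n d::nat. 0 < d \<longrightarrow>
     (\<exists>(P::instr list) (outs::nat list).
        length outs = n \<and>
        (\<forall>T::real. T \<ge> 1 \<longrightarrow> prog_cost T P \<le> C * real n * real d ^ 2 * T) \<and>
        (\<forall>c. hyperbolic_poly n d c \<longrightarrow>
           (\<forall>x w :: nat \<Rightarrow> real. peval n c x \<noteq> (0::real) \<longrightarrow>
              (\<forall>i<n. reg (run (peval n c) x w P) (outs ! i)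
                     = of_real (hess_vec n (\<lambda>y. - ln \<bar>peval n c y\<bar>) x w i)))))"
proof (intro exI[of _ 54] allI impI, goal_cases)
  case (1 n d)
  show ?case
  proof (intro exI[of _ "hess_prog n d"] exI[of _ "map (hess_out n d) [0..<n]"] conjI allI impI)
    show "prog_cost T (hess_prog n d) \<le> 54 * real n * real d ^ 2 * T" if "1 \<le> T" for T
      using prog_cost_hess_prog[OF \<open>0 < d\<close> that] .
    show "reg (run (peval n c) x w (hess_prog n d)) (map (hess_out n d) [0..<n] ! i) =
        of_real (hess_vec n (\<lambda>y. - ln \<bar>peval n c y\<bar>) x w i)"
      if "hyperbolic_poly n d c" and "peval n c x \<noteq> 0" and "i < n" for c x w i
      using reg_run_hess_prog[of n c d x i w] that by (simp add: hyperbolic_poly_def homog_poly_def)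
  qed simp
qed

end
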